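(* Let $m_0\in\mathbb N$ be such that for every $m\ge m_0$, every graph on $m+1$ vertices that has minimum degree at least $\lfloor 2m/3\rfloor$ and a vertex of degree $m$ contains every tree with $m$ edges as a subgraph. Let $k\ge m_0$, let $G$ be a graph on $n$ vertices with $n\ge k+1$, set $a:=n-k$, and let $S$ be the set of vertices of $G$ of degree at most $\frac{2k}{3}+a$, with $b:=|S|$. If some vertex $v$ of $G$ has degree at least $k+b$, then $G$ contains every tree with $k$ edges as a subgraph.
   Context: "Contains $T$ as a subgraph" means there is an injective map $V(T)\to V(G)$ sending edges of $T$ to edges of $G$. *)

theory Defs
  imports Complex_Main
begin

definition finite_graph :: "'a set \<Rightarrow> 'a set set \<Rightarrow> bool" where
  "finite_graph V E \<longleftrightarrow> finite V \<and>
     (\<forall>e\<in>E. \<exists>x y. x \<noteq> y \<and> x \<in> V \<and> y \<in> V \<and> e = {x, y})"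

definition degree :: "'a set \<Rightarrow> 'a set set \<Rightarrow> 'a \<Rightarrow> nat" where
  "degree V E v = card {u \<in> V. {u, v} \<in> E}"

definition graph_connected :: "'a set \<Rightarrow> 'a set set \<Rightarrow> bool" where
  "graph_connected V E \<longleftrightarrow>
     (\<forall>x\<in>V. \<forall>y\<in>V. (\<lambda>u w. {u, w} \<in> E)\<^sup>*\<^sup>* x y)"

definition is_cycle :: "'a set set \<Rightarrow> 'a list \<Rightarrow> bool" where
  "is_cycle E cs \<longleftrightarrow> length cs \<ge> 3 \<and> distinct cs \<and>
     (\<forall>i. Suc i < length cs \<longrightarrow> {cs ! i, cs ! Suc i} \<in> E) \<and>
     {last cs, hd cs} \<in> E"

definition acyclic_graph :: "'a set \<Rightarrow> 'a set set \<Rightarrow> bool" where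
  "acyclic_graph V E \<longleftrightarrow> (\<nexists>cs. set cs \<subseteq> V \<and> is_cycle E cs)"

definition is_tree :: "'a set \<Rightarrow> 'a set set \<Rightarrow> bool" where
  "is_tree V E \<longleftrightarrow> finite_graph V E \<and> V \<noteq> {} \<and> graph_connected V E \<and> acyclic_graph V E"

definition contains_subgraph :: "'a set \<Rightarrow> 'a set set \<Rightarrow> 'b set \<Rightarrow> 'b set set \<Rightarrow> bool" where
  "contains_subgraph V E TV TE \<longleftrightarrow>
     (\<exists>f. inj_on f TV \<and> f ` TV \<subseteq> V \<and> (\<forall>x y. {x, y} \<in> TE \<longrightarrow> {f x, f y} \<in> E))"

end

theory Submission imports Defs begin

text \<open>Pick the vertex v of large degree. Since at most b of its neighbours lie in the
  low-degree set S, v has k neighbours outside S; together with v they span an induced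
  subgraph on k + 1 vertices in which v has degree k. Every other vertex x of it has
  degree more than 2k/3 + (n - k) in G, and at most n - k - 1 of those neighbours lie
  outside the chosen vertices, so x keeps degree more than 2k/3. The hypothesis therefore
  applies to (a copy on the naturals of) this subgraph, and embeddings compose.\<close>

definition induced_edges :: "'a set set \<Rightarrow> 'a set \<Rightarrow> 'a set set" where
  "induced_edges E W = {e \<in> E. e \<subseteq> W}"

lemma finite_graph_edge_subset: "finite_graph V E \<Longrightarrow> e \<in> E \<Longrightarrow> e \<subseteq> V"
  unfolding finite_graph_def by fastforce

lemma finite_graph_no_loop: "finite_graph V E \<Longrightarrow> {x, x} \<notin> E"
  unfolding finite_graph_def by (metis doubleton_eq_iff)

lemma edge_image: "{x, y} \<in> E \<Longrightarrow> {g x, g y} \<in> (`) g ` E"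
  by (metis image_empty image_eqI image_insert)

lemma contains_subgraph_trans:
  assumes "contains_subgraph V E W F" "contains_subgraph W F TV TE"
  shows "contains_subgraph V E TV TE"
proof -
  obtain f where f: "inj_on f W" "f ` W \<subseteq> V" "\<forall>x y. {x, y} \<in> F \<longrightarrow> {f x, f y} \<in> E"
    using assms(1) unfolding contains_subgraph_def by blast
  obtain g where g: "inj_on g TV" "g ` TV \<subseteq> W" "\<forall>x y. {x, y} \<in> TE \<longrightarrow> {g x, g y} \<in> F"
    using assms(2) unfolding contains_subgraph_def by blast
  have "inj_on (f \<circ> g) TV" using f(1) g(1,2) by (simp add: comp_inj_on inj_on_subset)
  moreover have "(f \<circ> g) ` TV \<subseteq> V" using f(2) g(2) by (auto simp: image_comp[symmetric])
  ultimately show ?thesis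
    using f(3) g(3) unfolding contains_subgraph_def by (intro exI[of _ "f \<circ> g"]) auto
qed

lemma contains_subgraph_induced: "W \<subseteq> V \<Longrightarrow> contains_subgraph V E W (induced_edges E W)"
  unfolding contains_subgraph_def induced_edges_def by (intro exI[of _ id]) auto

lemma contains_subgraph_image:
  "inj_on g V \<Longrightarrow> contains_subgraph (g ` V) ((`) g ` E) V E"
  unfolding contains_subgraph_def by (blast intro: edge_image)

lemma contains_subgraph_image_inv:
  assumes "inj_on g V" "finite_graph V E"
  shows "contains_subgraph V E (g ` V) ((`) g ` E)"
  unfolding contains_subgraph_def
proof (intro exI conjI allI impI)
  show "inj_on (inv_into V g) (g ` V)" by (rule inj_on_inv_into) simp
  show "inv_into V g ` g ` V \<subseteq> V" by (auto intro: inv_into_into)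
next
  fix p q assume "{p, q} \<in> (`) g ` E"
  then obtain e where e: "e \<in> E" "{p, q} = g ` e" by blast
  have "inv_into V g ` g ` e = e"
    using assms(1) finite_graph_edge_subset[OF assms(2) e(1)] by (simp add: inv_into_image_cancel)
  then show "{inv_into V g p, inv_into V g q} \<in> E" using e by (metis image_empty image_insert)
qed

lemma finite_graph_image:
  assumes "inj_on g V" "finite_graph V E"
  shows "finite_graph (g ` V) ((`) g ` E)"
  unfolding finite_graph_def
proof (intro conjI ballI)
  show "finite (g ` V)" using assms(2) unfolding finite_graph_def by simp
next
  fix e' assume "e' \<in> (`) g ` E"
  then obtain e where e: "e \<in> E" "e' = g ` e" by blast
  then obtain x y where xy: "x \<noteq> y" "x \<in> V" "y \<in> V" "e = {x, y}"
    using assms(2) unfolding finite_graph_def by blast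
  then have "g x \<noteq> g y" using assms(1) unfolding inj_on_def by blast
  then show "\<exists>x y. x \<noteq> y \<and> x \<in> g ` V \<and> y \<in> g ` V \<and> e' = {x, y}"
    using xy e by auto
qed

lemma edge_image_iff:
  assumes "inj_on g V" "finite_graph V E" "x \<in> V" "y \<in> V"
  shows "{g x, g y} \<in> (`) g ` E \<longleftrightarrow> {x, y} \<in> E"
proof
  assume "{g x, g y} \<in> (`) g ` E"
  then obtain e where e: "e \<in> E" "g ` e = g ` {x, y}" by auto
  have "e \<subseteq> V" "{x, y} \<subseteq> V"
    using finite_graph_edge_subset[OF assms(2) e(1)] assms(3,4) by auto
  then have "e = {x, y}" using e(2) inj_on_image_eq_iff[OF assms(1)] by blast
  then show "{x, y} \<in> E" using e by simp
qed (rule edge_image)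

lemma degree_image:
  assumes "inj_on g V" "finite_graph V E" "x \<in> V"
  shows "degree (g ` V) ((`) g ` E) (g x) = degree V E x"
proof -
  have "{u \<in> g ` V. {u, g x} \<in> (`) g ` E} = g ` {u \<in> V. {u, x} \<in> E}"
    using edge_image_iff[OF assms(1,2) _ assms(3)] by auto
  moreover have "inj_on g {u \<in> V. {u, x} \<in> E}" using assms(1) by (rule inj_on_subset) auto
  ultimately show ?thesis unfolding degree_def by (simp add: card_image)
qed

lemma card_image_edges:
  assumes "inj_on g V" "finite_graph V E"
  shows "card ((`) g ` E) = card E"
proof -
  have "inj_on ((`) g) E"
    using inj_on_image_eq_iff[OF assms(1)] finite_graph_edge_subset[OF assms(2)]
    by (intro inj_onI) blast
  then show ?thesis by (simp add: card_image)
qed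

lemma rtranclp_map:
  assumes "r\<^sup>*\<^sup>* x y" "\<And>a b. r a b \<Longrightarrow> s (f a) (f b)"
  shows "s\<^sup>*\<^sup>* (f x) (f y)"
  using assms(1) by induction (auto intro: rtranclp.rtrancl_into_rtrancl assms(2))

lemma graph_connected_image:
  "graph_connected V E \<Longrightarrow> graph_connected (g ` V) ((`) g ` E)"
  unfolding graph_connected_def by (blast intro: rtranclp_map edge_image)

lemma acyclic_graph_subgraph:
  assumes "acyclic_graph V E" "contains_subgraph V E W F"
  shows "acyclic_graph W F"
  unfolding acyclic_graph_def
proof
  assume "\<exists>cs. set cs \<subseteq> W \<and> is_cycle F cs"
  then obtain cs where cs: "set cs \<subseteq> W" "is_cycle F cs" by blast
  obtain f where f: "inj_on f W" "f ` W \<subseteq> V" "\<forall>x y. {x, y} \<in> F \<longrightarrow> {f x, f y} \<in> E"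
    using assms(2) unfolding contains_subgraph_def by blast
  have "cs \<noteq> []" using cs(2) unfolding is_cycle_def by auto
  then have "is_cycle E (map f cs)"
    using cs f(3) inj_on_subset[OF f(1) cs(1)]
    unfolding is_cycle_def by (simp add: distinct_map last_map hd_map)
  moreover have "set (map f cs) \<subseteq> V" using cs(1) f(2) by auto
  ultimately show False using assms(1) unfolding acyclic_graph_def by blast
qed

lemma is_tree_image:
  assumes "inj_on g V" "is_tree V E"
  shows "is_tree (g ` V) ((`) g ` E)"
proof -
  have fg: "finite_graph V E" using assms(2) unfolding is_tree_def by simp
  have "acyclic_graph (g ` V) ((`) g ` E)"
    using assms(2) contains_subgraph_image_inv[OF assms(1) fg]
    unfolding is_tree_def by (blast intro: acyclic_graph_subgraph)
  then show ?thesis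
    using assms(2) finite_graph_image[OF assms(1) fg] graph_connected_image
    unfolding is_tree_def by blast
qed

lemma finite_graph_inj_to_nat:
  assumes "finite_graph V E"
  obtains g :: "'a \<Rightarrow> nat" where "inj_on g V"
  using assms finite_imp_inj_to_nat_seg[of V] unfolding finite_graph_def by blast

lemma tree_nat_copy:
  assumes "is_tree TV TE"
  obtains TV' :: "nat set" and TE'
  where "is_tree TV' TE'" "card TE' = card TE" "contains_subgraph TV' TE' TV TE"
proof -
  have fg: "finite_graph TV TE" using assms unfolding is_tree_def by simp
  then obtain g :: "_ \<Rightarrow> nat" where g: "inj_on g TV"
    using finite_graph_inj_to_nat by blast
  show ?thesis
    using that is_tree_image[OF g assms] card_image_edges[OF g fg] contains_subgraph_image[OF g] .
qed

lemma finite_graph_induced: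
  assumes "finite_graph V E" "W \<subseteq> V"
  shows "finite_graph W (induced_edges E W)"
  unfolding finite_graph_def
proof (intro conjI ballI)
  show "finite W" using assms finite_subset unfolding finite_graph_def by blast
next
  fix e assume "e \<in> induced_edges E W"
  then have e: "e \<in> E" "e \<subseteq> W" unfolding induced_edges_def by auto
  then obtain x y where "x \<noteq> y" "e = {x, y}" using assms(1) unfolding finite_graph_def by blast
  then show "\<exists>x y. x \<noteq> y \<and> x \<in> W \<and> y \<in> W \<and> e = {x, y}" using e(2) by auto
qed

lemma degree_induced:
  "x \<in> W \<Longrightarrow> degree W (induced_edges E W) x = card {u \<in> W. {u, x} \<in> E}"
  unfolding degree_def induced_edges_def by (intro arg_cong[where f = card]) auto

lemma degree_le_degree_induced:
  assumes "finite V" "W \<subseteq> V" "x \<in> W"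
  shows "degree V E x \<le> degree W (induced_edges E W) x + (card V - card W)"
proof -
  have "degree V E x \<le> card ({u \<in> W. {u, x} \<in> E} \<union> (V - W))"
    unfolding degree_def using assms(1,2) by (intro card_mono) (auto intro: finite_subset)
  also have "\<dots> \<le> card {u \<in> W. {u, x} \<in> E} + card (V - W)" by (rule card_Un_le)
  also have "\<dots> = degree W (induced_edges E W) x + (card V - card W)"
    using assms by (simp add: degree_induced card_Diff_subset finite_subset)
  finally show ?thesis .
qed

lemma dense_induced_subgraph:
  fixes k :: nat and V :: "'a set" and E :: "'a set set"
  defines "S \<equiv> {u \<in> V. real (degree V E u) \<le> 2 * real k / 3 + real (card V - k)}"
  assumes G: "finite_graph V E" and n: "card V \<ge> k + 1"
    and v: "v \<in> V" "degree V E v \<ge> k + card S"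
  obtains W where "W \<subseteq> V" "card W = k + 1" "v \<in> W"
    "degree W (induced_edges E W) v = k"
    "\<forall>x\<in>W. 2 * k div 3 \<le> degree W (induced_edges E W) x"
proof -
  define N where "N = {u \<in> V. {u, v} \<in> E}"
  have finV: "finite V" using G unfolding finite_graph_def by simp
  have "k \<le> card N - card S" using v(2) unfolding degree_def N_def by simp
  also have "\<dots> \<le> card (N - S)" using finV by (intro diff_card_le_card_Diff) (simp add: S_def)
  finally obtain U where U: "U \<subseteq> N - S" "card U = k" by (meson obtain_subset_with_card_n)
  have vU: "v \<notin> U" using U(1) finite_graph_no_loop[OF G] unfolding N_def by auto
  define W where "W = insert v U"
  have WV: "W \<subseteq> V" using U(1) v(1) unfolding W_def N_def by auto
  have finU: "finite U" using finite_subset[OF WV finV] unfolding W_def by simp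
  have cardW: "card W = k + 1" using U(2) vU finU unfolding W_def by simp
  have "{u \<in> W. {u, v} \<in> E} = U"
    using U(1) finite_graph_no_loop[OF G] unfolding W_def N_def by auto
  then have deg_v: "degree W (induced_edges E W) v = k"
    using U(2) by (simp add: degree_induced W_def)
  have min_deg: "\<forall>x\<in>W. 2 * k div 3 \<le> degree W (induced_edges E W) x"
  proof
    fix x assume x: "x \<in> W"
    show "2 * k div 3 \<le> degree W (induced_edges E W) x"
    proof (cases "x = v")
      case False
      then have "x \<in> V - S" using x U(1) unfolding W_def N_def by auto
      then have "real (degree V E x) > 2 * real k / 3 + real (card V - k)" unfolding S_def by auto
      moreover have "degree V E x \<le> degree W (induced_edges E W) x + (card V - (k + 1))"
        using degree_le_degree_induced[OF finV WV x] cardW by simp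
      ultimately have "3 * degree W (induced_edges E W) x > 2 * k" using n by linarith
      then show ?thesis by linarith
    qed (simp add: deg_v)
  qed
  show ?thesis by (rule that[OF WV cardW _ deg_v min_deg]) (simp add: W_def)
qed

theorem mainTheorem5:
  fixes m0 k :: nat and V :: "'a set" and E :: "'a set set"
  assumes hyp: "\<forall>m\<ge>m0. \<forall>(GV :: nat set) GE.
      finite_graph GV GE \<and> card GV = m + 1 \<and>
      (\<forall>v\<in>GV. degree GV GE v \<ge> (2 * m) div 3) \<and>
      (\<exists>v\<in>GV. degree GV GE v = m)
      \<longrightarrow> (\<forall>(TV :: nat set) TE. is_tree TV TE \<and> card TE = m
              \<longrightarrow> contains_subgraph GV GE TV TE)"
    and k: "k \<ge> m0"
    and G: "finite_graph V E"
    and n: "card V \<ge> k + 1"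
    and v: "\<exists>v\<in>V. degree V E v \<ge> k + card {u \<in> V. real (degree V E u) \<le> 2 * real k / 3 + real (card V - k)}"
  shows "\<forall>(TV :: 'b set) TE. is_tree TV TE \<and> card TE = k \<longrightarrow> contains_subgraph V E TV TE"
proof (intro allI impI)
  fix TV :: "'b set" and TE assume T: "is_tree TV TE \<and> card TE = k"
  obtain TV' :: "nat set" and TE' where T': "is_tree TV' TE'" "card TE' = k" "contains_subgraph TV' TE' TV TE"
    using T tree_nat_copy[of TV TE] by auto
  obtain v0 where v0: "v0 \<in> V"
    "degree V E v0 \<ge> k + card {u \<in> V. real (degree V E u) \<le> 2 * real k / 3 + real (card V - k)}"
    using v by blast
  obtain W where W: "W \<subseteq> V" "card W = k + 1" "v0 \<in> W" "degree W (induced_edges E W) v0 = k"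
      "\<forall>x\<in>W. 2 * k div 3 \<le> degree W (induced_edges E W) x"
    by (rule dense_induced_subgraph[OF G n v0])
  define F where "F = induced_edges E W"
  have GW: "finite_graph W F" unfolding F_def using finite_graph_induced[OF G W(1)] .
  then obtain h :: "'a \<Rightarrow> nat" where h: "inj_on h W"
    using finite_graph_inj_to_nat by blast
  have "\<forall>y\<in>h ` W. 2 * k div 3 \<le> degree (h ` W) ((`) h ` F) y"
    using W(5) degree_image[OF h GW] unfolding F_def by auto
  moreover have "\<exists>y\<in>h ` W. degree (h ` W) ((`) h ` F) y = k"
    using W(3,4) degree_image[OF h GW] unfolding F_def by auto
  moreover have "card (h ` W) = k + 1" using W(2) card_image[OF h] by simp
  ultimately have "contains_subgraph (h ` W) ((`) h ` F) TV' TE'"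
    using hyp[rule_format, OF k, of "h ` W" "(`) h ` F" TV' TE'] finite_graph_image[OF h GW] T'(1,2)
    by blast
  then show "contains_subgraph V E TV TE"
    using contains_subgraph_induced[OF W(1)] contains_subgraph_image_inv[OF h GW] T'(3)
    unfolding F_def by (blast intro: contains_subgraph_trans)
qed

end
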